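(* There is no C-loop $L$ whose nucleus $N$ has index $2$ in $L$ (i.e. such that $N$ has exactly two cosets in $L$).
   Context: A C-loop is a loop satisfying $x(y(yz))=((xy)y)z$ for all $x,y,z$. The nucleus $N$ of a loop is the set of elements $a$ with $a(yz)=(ay)z$, $y(az)=(ya)z$, $y(za)=(yz)a$ for all $y,z$; in a C-loop it is a normal subloop, so its cosets form the factor loop $L/N$. *)

theory Defs
  imports Main
begin

definition loop :: "'a set \<Rightarrow> ('a \<Rightarrow> 'a \<Rightarrow> 'a) \<Rightarrow> 'a \<Rightarrow> bool" where
  "loop L m e \<longleftrightarrow>
     e \<in> L \<and>
     (\<forall>x\<in>L. \<forall>y\<in>L. m x y \<in> L) \<and>
     (\<forall>x\<in>L. m e x = x \<and> m x e = x) \<and>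
     (\<forall>a\<in>L. \<forall>b\<in>L. \<exists>!x. x \<in> L \<and> m a x = b) \<and>
     (\<forall>a\<in>L. \<forall>b\<in>L. \<exists>!y. y \<in> L \<and> m y a = b)"

definition c_loop :: "'a set \<Rightarrow> ('a \<Rightarrow> 'a \<Rightarrow> 'a) \<Rightarrow> 'a \<Rightarrow> bool" where
  "c_loop L m e \<longleftrightarrow> loop L m e \<and>
     (\<forall>x\<in>L. \<forall>y\<in>L. \<forall>z\<in>L. m x (m y (m y z)) = m (m (m x y) y) z)"

definition nucleus :: "'a set \<Rightarrow> ('a \<Rightarrow> 'a \<Rightarrow> 'a) \<Rightarrow> 'a set" where
  "nucleus L m = {a \<in> L. \<forall>y\<in>L. \<forall>z\<in>L.
      m a (m y z) = m (m a y) z \<and>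
      m y (m a z) = m (m y a) z \<and>
      m y (m z a) = m (m y z) a}"

definition lcosets :: "'a set \<Rightarrow> ('a \<Rightarrow> 'a \<Rightarrow> 'a) \<Rightarrow> 'a set \<Rightarrow> 'a set set" where
  "lcosets L m N = {(\<lambda>n. m a n) ` N | a. a \<in> L}"

end

theory Submission
  imports Defs
begin

text \<open>
  The nucleus N is a subgroup of L, so n a \<in> N with n \<in> N forces a \<in> N. If N had index 2,
  pick a \<notin> N: then L = N \<union> aN and Na \<subseteq> aN. Writing every element as n or a n and moving
  nucleus elements across products, each of the three nucleus identities for a reduces to
  a(aa) = (aa)a, which the C-law yields for x = e. Hence a \<in> N, a contradiction; the argument
  works in every loop satisfying x(xx) = (xx)x.
\<close>

locale loop_on =
  fixes L :: "'a set" and m :: "'a \<Rightarrow> 'a \<Rightarrow> 'a" (infixl "\<cdot>" 70) and e :: 'a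
  assumes loop: "loop L m e"
begin

lemma unit_closed: "e \<in> L"
  using loop by (simp add: loop_def)

lemma mult_closed: "x \<in> L \<Longrightarrow> y \<in> L \<Longrightarrow> x \<cdot> y \<in> L"
  using loop by (simp add: loop_def)

lemma left_unit: "x \<in> L \<Longrightarrow> e \<cdot> x = x"
  using loop by (simp add: loop_def)

lemma right_unit: "x \<in> L \<Longrightarrow> x \<cdot> e = x"
  using loop by (simp add: loop_def)

lemma left_division: "a \<in> L \<Longrightarrow> b \<in> L \<Longrightarrow> \<exists>!x. x \<in> L \<and> a \<cdot> x = b"
  using loop by (simp add: loop_def)

lemma right_division: "a \<in> L \<Longrightarrow> b \<in> L \<Longrightarrow> \<exists>!y. y \<in> L \<and> y \<cdot> a = b"
  using loop by (simp add: loop_def)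

lemma left_divisionE:
  assumes "a \<in> L" "b \<in> L"
  obtains x where "x \<in> L" "a \<cdot> x = b"
  using left_division[OF assms] by (elim ex1E) blast

lemma mult_left_cancel:
  assumes "a \<in> L" "x \<in> L" "y \<in> L"
  shows "a \<cdot> x = a \<cdot> y \<longleftrightarrow> x = y"
proof
  assume eq: "a \<cdot> x = a \<cdot> y"
  obtain z where "\<forall>w. w \<in> L \<and> a \<cdot> w = a \<cdot> x \<longrightarrow> w = z"
    using left_division[OF assms(1) mult_closed[OF assms(1,2)]] by (elim ex1E) blast
  then show "x = y" using assms eq by metis
qed simp

lemma mult_right_cancel:
  assumes "a \<in> L" "x \<in> L" "y \<in> L"
  shows "x \<cdot> a = y \<cdot> a \<longleftrightarrow> x = y"
proof
  assume eq: "x \<cdot> a = y \<cdot> a"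
  obtain z where "\<forall>w. w \<in> L \<and> w \<cdot> a = x \<cdot> a \<longrightarrow> w = z"
    using right_division[OF assms(1) mult_closed[OF assms(2,1)]] by (elim ex1E) blast
  then show "x = y" using assms eq by metis
qed simp

abbreviation N :: "'a set" where
  "N \<equiv> nucleus L m"

lemma nucleus_closed: "n \<in> N \<Longrightarrow> n \<in> L"
  unfolding nucleus_def by simp

lemma nucleus_left: "n \<in> N \<Longrightarrow> y \<in> L \<Longrightarrow> z \<in> L \<Longrightarrow> n \<cdot> (y \<cdot> z) = (n \<cdot> y) \<cdot> z"
  unfolding nucleus_def by simp

lemma nucleus_middle: "n \<in> N \<Longrightarrow> y \<in> L \<Longrightarrow> z \<in> L \<Longrightarrow> y \<cdot> (n \<cdot> z) = (y \<cdot> n) \<cdot> z"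
  unfolding nucleus_def by simp

lemma nucleus_right: "n \<in> N \<Longrightarrow> y \<in> L \<Longrightarrow> z \<in> L \<Longrightarrow> y \<cdot> (z \<cdot> n) = (y \<cdot> z) \<cdot> n"
  unfolding nucleus_def by simp

lemma in_nucleusI:
  assumes "a \<in> L"
    and "\<And>y z. y \<in> L \<Longrightarrow> z \<in> L \<Longrightarrow> a \<cdot> (y \<cdot> z) = (a \<cdot> y) \<cdot> z"
    and "\<And>y z. y \<in> L \<Longrightarrow> z \<in> L \<Longrightarrow> y \<cdot> (a \<cdot> z) = (y \<cdot> a) \<cdot> z"
    and "\<And>y z. y \<in> L \<Longrightarrow> z \<in> L \<Longrightarrow> y \<cdot> (z \<cdot> a) = (y \<cdot> z) \<cdot> a"
  shows "a \<in> N"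
  unfolding nucleus_def using assms by simp

lemma unit_in_nucleus: "e \<in> N"
  by (rule in_nucleusI) (simp_all add: unit_closed left_unit right_unit mult_closed)

lemma nucleus_mult_closed:
  assumes n: "n \<in> N" and k: "k \<in> N"
  shows "n \<cdot> k \<in> N"
proof (rule in_nucleusI)
  have [simp]: "n \<in> L" "k \<in> L" using n k nucleus_closed by auto
  show "n \<cdot> k \<in> L" by (simp add: mult_closed)
  fix y z assume [simp]: "y \<in> L" "z \<in> L"
  have "(n \<cdot> k) \<cdot> (y \<cdot> z) = n \<cdot> (k \<cdot> (y \<cdot> z))" by (simp add: nucleus_left n mult_closed)
  also have "\<dots> = n \<cdot> ((k \<cdot> y) \<cdot> z)" by (simp add: nucleus_left k)
  also have "\<dots> = (n \<cdot> (k \<cdot> y)) \<cdot> z" by (simp add: nucleus_left n mult_closed)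
  also have "\<dots> = ((n \<cdot> k) \<cdot> y) \<cdot> z" by (simp add: nucleus_left n)
  finally show "(n \<cdot> k) \<cdot> (y \<cdot> z) = ((n \<cdot> k) \<cdot> y) \<cdot> z" .
  have "y \<cdot> ((n \<cdot> k) \<cdot> z) = y \<cdot> (n \<cdot> (k \<cdot> z))" by (simp add: nucleus_left n)
  also have "\<dots> = (y \<cdot> n) \<cdot> (k \<cdot> z)" by (simp add: nucleus_middle n mult_closed)
  also have "\<dots> = ((y \<cdot> n) \<cdot> k) \<cdot> z" by (simp add: nucleus_middle k mult_closed)
  also have "\<dots> = (y \<cdot> (n \<cdot> k)) \<cdot> z" by (simp add: nucleus_middle n)
  finally show "y \<cdot> ((n \<cdot> k) \<cdot> z) = (y \<cdot> (n \<cdot> k)) \<cdot> z" .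
  have "y \<cdot> (z \<cdot> (n \<cdot> k)) = y \<cdot> ((z \<cdot> n) \<cdot> k)" by (simp add: nucleus_right k)
  also have "\<dots> = (y \<cdot> (z \<cdot> n)) \<cdot> k" by (simp add: nucleus_right k mult_closed)
  also have "\<dots> = ((y \<cdot> z) \<cdot> n) \<cdot> k" by (simp add: nucleus_right n)
  also have "\<dots> = (y \<cdot> z) \<cdot> (n \<cdot> k)" by (simp add: nucleus_right k mult_closed)
  finally show "y \<cdot> (z \<cdot> (n \<cdot> k)) = (y \<cdot> z) \<cdot> (n \<cdot> k)" .
qed

lemma nucleus_inverse:
  assumes n: "n \<in> N"
  obtains u where "u \<in> N" "n \<cdot> u = e" "u \<cdot> n = e"
proof -
  have nL [simp]: "n \<in> L" using n nucleus_closed by simp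
  obtain u where uL [simp]: "u \<in> L" and nu: "n \<cdot> u = e"
    using left_divisionE[OF nL unit_closed] by blast
  have "n \<cdot> (u \<cdot> n) = n \<cdot> e"
    using nucleus_left[OF n uL nL] by (simp add: nu left_unit right_unit)
  then have un: "u \<cdot> n = e"
    by (simp add: mult_left_cancel mult_closed unit_closed)
  have right_inverse: "(y \<cdot> u) \<cdot> n = y" if "y \<in> L" for y
    using nucleus_right[OF n that uL] by (simp add: un right_unit that)
  have "u \<in> N"
  proof (rule in_nucleusI)
    fix y z assume [simp]: "y \<in> L" "z \<in> L"
    have "n \<cdot> (u \<cdot> (y \<cdot> z)) = n \<cdot> ((u \<cdot> y) \<cdot> z)"
      by (simp add: nucleus_left[OF n] mult_closed nu left_unit)
    then show "u \<cdot> (y \<cdot> z) = (u \<cdot> y) \<cdot> z"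
      by (simp add: mult_left_cancel mult_closed)
    have "y \<cdot> (u \<cdot> z) = ((y \<cdot> u) \<cdot> n) \<cdot> (u \<cdot> z)" by (simp add: right_inverse)
    also have "\<dots> = (y \<cdot> u) \<cdot> z"
      by (simp add: nucleus_middle[OF n, symmetric] nucleus_left[OF n] mult_closed nu left_unit)
    finally show "y \<cdot> (u \<cdot> z) = (y \<cdot> u) \<cdot> z" .
    have "(y \<cdot> (z \<cdot> u)) \<cdot> n = ((y \<cdot> z) \<cdot> u) \<cdot> n"
      by (simp add: nucleus_right[OF n, symmetric] mult_closed un right_unit)
    then show "y \<cdot> (z \<cdot> u) = (y \<cdot> z) \<cdot> u"
      by (simp add: mult_right_cancel mult_closed)
  qed simp
  then show ?thesis using that nu un by blast
qed

lemma right_factor_in_nucleus: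
  assumes n: "n \<in> N" and a: "a \<in> L" and na: "n \<cdot> a \<in> N"
  shows "a \<in> N"
proof -
  obtain u where u: "u \<in> N" "u \<cdot> n = e" using nucleus_inverse[OF n] by blast
  have "a = u \<cdot> (n \<cdot> a)"
    using nucleus_left[OF u(1) nucleus_closed[OF n] a] by (simp add: u(2) left_unit a)
  then show ?thesis using nucleus_mult_closed[OF u(1) na] by simp
qed

lemma lcosets_carrier: "lcosets L m L = {L}"
proof -
  have "(\<lambda>n. x \<cdot> n) ` L = L" if x: "x \<in> L" for x
  proof
    show "(\<lambda>n. x \<cdot> n) ` L \<subseteq> L" using mult_closed x by blast
    show "L \<subseteq> (\<lambda>n. x \<cdot> n) ` L"
    proof
      fix y assume "y \<in> L"
      then obtain z where "z \<in> L" "x \<cdot> z = y" using left_divisionE[OF x] by blast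
      then show "y \<in> (\<lambda>n. x \<cdot> n) ` L" by blast
    qed
  qed
  then show ?thesis unfolding lcosets_def using unit_closed by blast
qed

lemma index_two_cover:
  assumes eH: "e \<in> H" and HL: "H \<subseteq> L" and two: "card (lcosets L m H) = 2"
  obtains a where "a \<in> L" "a \<notin> H" "L \<subseteq> H \<union> (\<lambda>n. a \<cdot> n) ` H"
proof -
  have in_own_coset: "x \<in> (\<lambda>n. x \<cdot> n) ` H" if "x \<in> L" for x
    using eH right_unit[OF that] by force
  have "L \<noteq> H" using two lcosets_carrier by auto
  then obtain a where a: "a \<in> L" "a \<notin> H" using HL by blast
  let ?aH = "(\<lambda>n. a \<cdot> n) ` H"
  have "(\<lambda>n. e \<cdot> n) ` H = H" using HL left_unit by force
  then have sub: "{H, ?aH} \<subseteq> lcosets L m H"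
    unfolding lcosets_def using unit_closed a(1) by blast
  have "?aH \<noteq> H" using in_own_coset[OF a(1)] a(2) by blast
  then have "card {H, ?aH} = 2" by simp
  with sub have cosets: "lcosets L m H = {H, ?aH}"
    using two by (metis card.infinite card_subset_eq zero_neq_numeral)
  have "L \<subseteq> H \<union> ?aH"
  proof
    fix x assume x: "x \<in> L"
    then have "(\<lambda>n. x \<cdot> n) ` H \<in> {H, ?aH}" unfolding cosets[symmetric] lcosets_def by blast
    then show "x \<in> H \<union> ?aH" using in_own_coset[OF x] by blast
  qed
  then show ?thesis using that a by blast
qed

lemma c_loop_cube_commute:
  assumes "c_loop L m e" "x \<in> L"
  shows "x \<cdot> (x \<cdot> x) = (x \<cdot> x) \<cdot> x"
proof -
  have "e \<cdot> (x \<cdot> (x \<cdot> x)) = ((e \<cdot> x) \<cdot> x) \<cdot> x"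
    using assms unit_closed unfolding c_loop_def by simp
  then show ?thesis using assms(2) by (simp add: left_unit mult_closed)
qed

context
  fixes a :: 'a
  assumes a: "a \<in> L"
    and cube: "a \<cdot> (a \<cdot> a) = (a \<cdot> a) \<cdot> a"
    and swap: "(\<lambda>n. n \<cdot> a) ` N \<subseteq> (\<lambda>n. a \<cdot> n) ` N"
    and cover: "L \<subseteq> N \<union> (\<lambda>n. a \<cdot> n) ` N"
begin

lemma cover_cases:
  assumes "y \<in> L"
  obtains "y \<in> N" | n where "n \<in> N" "y = a \<cdot> n"
  using cover assms by blast

lemma swapE:
  assumes "n \<in> N"
  obtains p where "p \<in> N" "n \<cdot> a = a \<cdot> p"
  using swap assms by blast

lemma coset_mult_right:
  assumes n: "n \<in> N" and p: "p \<in> N" and np: "n \<cdot> a = a \<cdot> p"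
  shows "(a \<cdot> n) \<cdot> a = (a \<cdot> a) \<cdot> p"
proof -
  have "(a \<cdot> n) \<cdot> a = a \<cdot> (n \<cdot> a)" using nucleus_middle[OF n a a] by simp
  also have "\<dots> = (a \<cdot> a) \<cdot> p" using nucleus_right[OF p a a] np by simp
  finally show ?thesis .
qed

lemma left_alternative_at:
  assumes w: "w \<in> L"
  shows "a \<cdot> (a \<cdot> w) = (a \<cdot> a) \<cdot> w"
  using w
proof (cases rule: cover_cases)
  case 1
  then show ?thesis using nucleus_right a by simp
next
  case (2 n)
  have "a \<cdot> (a \<cdot> (a \<cdot> n)) = a \<cdot> ((a \<cdot> a) \<cdot> n)" by (simp add: nucleus_right 2(1) a)
  also have "\<dots> = (a \<cdot> (a \<cdot> a)) \<cdot> n" by (simp add: nucleus_right 2(1) a mult_closed)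
  also have "\<dots> = ((a \<cdot> a) \<cdot> a) \<cdot> n" by (simp add: cube)
  also have "\<dots> = (a \<cdot> a) \<cdot> (a \<cdot> n)" by (simp add: nucleus_right 2(1) a mult_closed)
  finally show ?thesis using 2(2) by simp
qed

lemma flexible_at:
  assumes w: "w \<in> L"
  shows "a \<cdot> (w \<cdot> a) = (a \<cdot> w) \<cdot> a"
  using w
proof (cases rule: cover_cases)
  case 1
  then show ?thesis using nucleus_middle a by simp
next
  case (2 n)
  obtain p where p: "p \<in> N" "n \<cdot> a = a \<cdot> p" using swapE[OF 2(1)] .
  have "a \<cdot> ((a \<cdot> n) \<cdot> a) = a \<cdot> ((a \<cdot> a) \<cdot> p)" using coset_mult_right[OF 2(1) p] by simp
  also have "\<dots> = ((a \<cdot> a) \<cdot> a) \<cdot> p" by (simp add: nucleus_right p(1) a mult_closed cube)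
  also have "\<dots> = (a \<cdot> a) \<cdot> (n \<cdot> a)" by (simp add: nucleus_right p a mult_closed)
  also have "\<dots> = (a \<cdot> (a \<cdot> n)) \<cdot> a" by (simp add: nucleus_middle 2(1) nucleus_right a mult_closed)
  finally show ?thesis using 2(2) by simp
qed

lemma in_left_nucleus:
  assumes y: "y \<in> L" and z: "z \<in> L"
  shows "a \<cdot> (y \<cdot> z) = (a \<cdot> y) \<cdot> z"
  using y
proof (cases rule: cover_cases)
  case 1
  then show ?thesis using nucleus_middle a z by simp
next
  case (2 n)
  have nL: "n \<in> L" using 2(1) nucleus_closed by simp
  have "a \<cdot> ((a \<cdot> n) \<cdot> z) = a \<cdot> (a \<cdot> (n \<cdot> z))" by (simp add: nucleus_middle 2(1) a z)
  also have "\<dots> = (a \<cdot> a) \<cdot> (n \<cdot> z)" by (simp add: left_alternative_at mult_closed nL z)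
  also have "\<dots> = (a \<cdot> (a \<cdot> n)) \<cdot> z" by (simp add: nucleus_middle nucleus_right 2(1) a z mult_closed)
  finally show ?thesis using 2(2) by simp
qed

lemma in_middle_nucleus:
  assumes y: "y \<in> L" and z: "z \<in> L"
  shows "y \<cdot> (a \<cdot> z) = (y \<cdot> a) \<cdot> z"
  using y
proof (cases rule: cover_cases)
  case 1
  then show ?thesis using nucleus_left a z by simp
next
  case (2 n)
  obtain p where p: "p \<in> N" "n \<cdot> a = a \<cdot> p" using swapE[OF 2(1)] .
  have pL: "p \<in> L" using p(1) nucleus_closed by simp
  have "(a \<cdot> n) \<cdot> (a \<cdot> z) = a \<cdot> ((n \<cdot> a) \<cdot> z)"
    by (simp add: nucleus_middle[symmetric] nucleus_left 2(1) a z mult_closed)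
  also have "\<dots> = a \<cdot> (a \<cdot> (p \<cdot> z))" by (simp add: p nucleus_middle a z)
  also have "\<dots> = (a \<cdot> a) \<cdot> (p \<cdot> z)" by (simp add: left_alternative_at pL z mult_closed)
  also have "\<dots> = ((a \<cdot> a) \<cdot> p) \<cdot> z" by (simp add: nucleus_middle p(1) a z mult_closed)
  also have "\<dots> = ((a \<cdot> n) \<cdot> a) \<cdot> z" using coset_mult_right[OF 2(1) p] by simp
  finally show ?thesis using 2(2) by simp
qed

lemma in_right_nucleus:
  assumes y: "y \<in> L" and z: "z \<in> L"
  shows "y \<cdot> (z \<cdot> a) = (y \<cdot> z) \<cdot> a"
  using y
proof (cases rule: cover_cases)
  case 1
  then show ?thesis using nucleus_left a z by simp
next
  case (2 n)
  have nL: "n \<in> L" using 2(1) nucleus_closed by simp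
  have "(a \<cdot> n) \<cdot> (z \<cdot> a) = a \<cdot> ((n \<cdot> z) \<cdot> a)"
    by (simp add: nucleus_middle[symmetric] nucleus_left 2(1) a z mult_closed)
  also have "\<dots> = (a \<cdot> (n \<cdot> z)) \<cdot> a" by (simp add: flexible_at nL z mult_closed)
  also have "\<dots> = ((a \<cdot> n) \<cdot> z) \<cdot> a" by (simp add: nucleus_middle 2(1) a z)
  finally show ?thesis using 2(2) by simp
qed

lemma in_nucleus: "a \<in> N"
  using a in_left_nucleus in_middle_nucleus in_right_nucleus by (rule in_nucleusI)

end

lemma coset_cover_imp_in_nucleus:
  assumes a: "a \<in> L" and cube: "a \<cdot> (a \<cdot> a) = (a \<cdot> a) \<cdot> a"
    and cover: "L \<subseteq> N \<union> (\<lambda>n. a \<cdot> n) ` N"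
  shows "a \<in> N"
proof (rule ccontr)
  assume "a \<notin> N"
  then have "n \<cdot> a \<notin> N" if "n \<in> N" for n
    using right_factor_in_nucleus[OF that a] by blast
  then have "(\<lambda>n. n \<cdot> a) ` N \<subseteq> (\<lambda>n. a \<cdot> n) ` N"
    using cover a nucleus_closed mult_closed by blast
  then show False using in_nucleus[OF a cube _ cover] \<open>a \<notin> N\<close> by blast
qed

end

theorem lemma2p7:
  fixes L :: "'a set" and m :: "'a \<Rightarrow> 'a \<Rightarrow> 'a" and e :: 'a
  assumes "c_loop L m e"
  shows "card (lcosets L m (nucleus L m)) \<noteq> 2"
proof
  assume two: "card (lcosets L m (nucleus L m)) = 2"
  interpret loop_on L m e using assms by (simp add: loop_on_def c_loop_def)
  have "nucleus L m \<subseteq> L" using nucleus_closed by blast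
  then obtain a where a: "a \<in> L" "a \<notin> nucleus L m"
    and cover: "L \<subseteq> nucleus L m \<union> (\<lambda>n. m a n) ` nucleus L m"
    using index_two_cover[OF unit_in_nucleus _ two] by blast
  have "m a (m a a) = m (m a a) a" using c_loop_cube_commute[OF assms a(1)] .
  then show False using coset_cover_imp_in_nucleus[OF a(1) _ cover] a(2) by blast
qed

end
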